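(* Let $\mathcal{C}$ be a Grothendieck site with enough points, let $G$ be a presheaf of groups on $\mathcal{C}$ with an involution $\theta\colon G\to G$, and let $B\subset G$ be a subgroup presheaf with $\theta(B)=B$. Let $B\times B$ act on $G$ by $(b_1,b_2)\cdot g=b_1gb_2^{-1}$, and let $\Gamma=\mathbb{Z}/2\mathbb{Z}$ act on the presheaf of groupoids $E_{B\times B}G$ by $\bar g=\theta(g^{-1})$ on objects and $\overline{(b_1,b_2)}=(\theta(b_2),\theta(b_1))$ on morphisms. Let $Z^1(\theta;G)$ be the presheaf of sets $Z^1(\theta;G)(U)=\{g\in G(U)\mid g\theta(g)=1\}$, with $B$ acting by twisted conjugation $b\cdot g=\theta(b)gb^{-1}$. Then there is a canonical acyclic sectionwise fibration \[(E_{B\times B}G)^{h\Gamma}\xrightarrow{\ \sim\ } E_BZ^1(\theta;G).\]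
   Context: A groupoid is a small category with all morphisms invertible. For a group $H$ acting on a set $S$, $\mathbb{E}_HS$ is the groupoid with object set $S$ and morphism set $H\times S$, where $(h,s)$ is an arrow $s\to h\cdot s$, composition given by multiplication in $H$. For a presheaf of groups $H$ acting on a presheaf of sets $S$, $E_HS$ is the presheaf of groupoids $U\mapsto\mathbb{E}_{H(U)}S(U)$. A map of groupoids is a weak equivalence if it is an equivalence of categories, and a fibration if for every object $x$ and isomorphism $\alpha\colon f(x)\to y$ there is an isomorphism $\beta\colon x\to x_1$ with $f(\beta)=\alpha$. A morphism of presheaves of groupoids is an acyclic sectionwise fibration if on each section $U$ it is both a fibration and a weak equivalence. For a groupoid $X$ with $\Gamma$-action (nontrivial element $x\mapsto\bar x$, acting on objects and morphisms compatibly with structure maps), $X^{h\Gamma}$ has objects $(x,\phi)$ with $\phi\in\mathrm{Hom}(x,\bar x)$, $\bar\phi=\phi^{-1}$, and arrows $(x,\phi)\to(x_1,\phi_1)$ the $\alpha\colon x\to x_1$ with $\phi_1\alpha=\bar\alpha\phi$; for presheaves, $X^{h\Gamma}(U)=X(U)^{h\Gamma}$. *)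

theory Defs
  imports "HOL-Algebra.Group"
begin

record ('o,'m) cat =
  Ob :: "'o set"
  Arr :: "'m set"
  cdom :: "'m \<Rightarrow> 'o"
  ccod :: "'m \<Rightarrow> 'o"
  cid :: "'o \<Rightarrow> 'm"
  ccomp :: "'m \<Rightarrow> 'm \<Rightarrow> 'm"   (* ccomp g f = g o f, f applied first *)

definition category :: "('o,'m) cat \<Rightarrow> bool" where
  "category C \<longleftrightarrow>
     (\<forall>f\<in>Arr C. cdom C f \<in> Ob C \<and> ccod C f \<in> Ob C) \<and>
     (\<forall>x\<in>Ob C. cid C x \<in> Arr C \<and> cdom C (cid C x) = x \<and> ccod C (cid C x) = x) \<and>
     (\<forall>f\<in>Arr C. \<forall>g\<in>Arr C. ccod C f = cdom C g \<longrightarrow>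
        ccomp C g f \<in> Arr C \<and> cdom C (ccomp C g f) = cdom C f \<and> ccod C (ccomp C g f) = ccod C g) \<and>
     (\<forall>f\<in>Arr C. ccomp C f (cid C (cdom C f)) = f \<and> ccomp C (cid C (ccod C f)) f = f) \<and>
     (\<forall>f\<in>Arr C. \<forall>g\<in>Arr C. \<forall>h\<in>Arr C. ccod C f = cdom C g \<longrightarrow> ccod C g = cdom C h \<longrightarrow>
        ccomp C h (ccomp C g f) = ccomp C (ccomp C h g) f)"

definition presheaf_of_groups ::
  "('o,'m) cat \<Rightarrow> ('o \<Rightarrow> 'a monoid) \<Rightarrow> ('m \<Rightarrow> 'a \<Rightarrow> 'a) \<Rightarrow> bool" where
  "presheaf_of_groups C G res \<longleftrightarrow>
     (\<forall>U\<in>Ob C. group (G U)) \<and>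
     (\<forall>f\<in>Arr C. res f \<in> hom (G (ccod C f)) (G (cdom C f))) \<and>
     (\<forall>U\<in>Ob C. \<forall>x\<in>carrier (G U). res (cid C U) x = x) \<and>
     (\<forall>f\<in>Arr C. \<forall>g\<in>Arr C. ccod C f = cdom C g \<longrightarrow>
        (\<forall>x\<in>carrier (G (ccod C g)). res (ccomp C g f) x = res f (res g x)))"

definition presheaf_involution ::
  "('o,'m) cat \<Rightarrow> ('o \<Rightarrow> 'a monoid) \<Rightarrow> ('m \<Rightarrow> 'a \<Rightarrow> 'a) \<Rightarrow> ('o \<Rightarrow> 'a \<Rightarrow> 'a) \<Rightarrow> bool" where
  "presheaf_involution C G res \<theta> \<longleftrightarrow>
     (\<forall>U\<in>Ob C. \<theta> U \<in> hom (G U) (G U) \<and> (\<forall>x\<in>carrier (G U). \<theta> U (\<theta> U x) = x)) \<and>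
     (\<forall>f\<in>Arr C. \<forall>x\<in>carrier (G (ccod C f)). res f (\<theta> (ccod C f) x) = \<theta> (cdom C f) (res f x))"

definition subgroup_presheaf ::
  "('o,'m) cat \<Rightarrow> ('o \<Rightarrow> 'a monoid) \<Rightarrow> ('m \<Rightarrow> 'a \<Rightarrow> 'a) \<Rightarrow> ('o \<Rightarrow> 'a set) \<Rightarrow> bool" where
  "subgroup_presheaf C G res B \<longleftrightarrow>
     (\<forall>U\<in>Ob C. subgroup (B U) (G U)) \<and>
     (\<forall>f\<in>Arr C. res f ` B (ccod C f) \<subseteq> B (cdom C f))"

record ('x,'y) grpd =
  gObj :: "'x set"
  gHom :: "'x \<Rightarrow> 'x \<Rightarrow> 'y set"
  gcomp :: "'y \<Rightarrow> 'y \<Rightarrow> 'y"   (* gcomp b a = b o a, a applied first *)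
  gid :: "'x \<Rightarrow> 'y"

definition is_functor ::
  "('x,'y) grpd \<Rightarrow> ('x2,'y2) grpd \<Rightarrow> ('x \<Rightarrow> 'x2) \<Rightarrow> ('x \<Rightarrow> 'x \<Rightarrow> 'y \<Rightarrow> 'y2) \<Rightarrow> bool" where
  "is_functor X Y Fo Fm \<longleftrightarrow>
     (\<forall>x\<in>gObj X. Fo x \<in> gObj Y) \<and>
     (\<forall>x\<in>gObj X. \<forall>y\<in>gObj X. \<forall>a\<in>gHom X x y. Fm x y a \<in> gHom Y (Fo x) (Fo y)) \<and>
     (\<forall>x\<in>gObj X. \<forall>y\<in>gObj X. \<forall>z\<in>gObj X. \<forall>a\<in>gHom X x y. \<forall>b\<in>gHom X y z.
        Fm x z (gcomp X b a) = gcomp Y (Fm y z b) (Fm x y a)) \<and>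
     (\<forall>x\<in>gObj X. Fm x x (gid X x) = gid Y (Fo x))"

definition iso_arr :: "('x,'y) grpd \<Rightarrow> 'x \<Rightarrow> 'x \<Rightarrow> 'y \<Rightarrow> bool" where
  "iso_arr X x y a \<longleftrightarrow> a \<in> gHom X x y \<and>
     (\<exists>b\<in>gHom X y x. gcomp X b a = gid X x \<and> gcomp X a b = gid X y)"

definition nat_iso ::
  "('x,'y) grpd \<Rightarrow> ('x2,'y2) grpd \<Rightarrow> ('x \<Rightarrow> 'x2) \<Rightarrow> ('x \<Rightarrow> 'x \<Rightarrow> 'y \<Rightarrow> 'y2)
     \<Rightarrow> ('x \<Rightarrow> 'x2) \<Rightarrow> ('x \<Rightarrow> 'x \<Rightarrow> 'y \<Rightarrow> 'y2) \<Rightarrow> ('x \<Rightarrow> 'y2) \<Rightarrow> bool" where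
  "nat_iso X Y Fo Fm Go Gm \<eta> \<longleftrightarrow>
     (\<forall>x\<in>gObj X. iso_arr Y (Fo x) (Go x) (\<eta> x)) \<and>
     (\<forall>x\<in>gObj X. \<forall>y\<in>gObj X. \<forall>a\<in>gHom X x y.
        gcomp Y (\<eta> y) (Fm x y a) = gcomp Y (Gm x y a) (\<eta> x))"

text \<open>Weak equivalence = equivalence of categories: a functor with a quasi-inverse.\<close>

definition weak_equivalence ::
  "('x,'y) grpd \<Rightarrow> ('x2,'y2) grpd \<Rightarrow> ('x \<Rightarrow> 'x2) \<Rightarrow> ('x \<Rightarrow> 'x \<Rightarrow> 'y \<Rightarrow> 'y2) \<Rightarrow> bool" where
  "weak_equivalence X Y Fo Fm \<longleftrightarrow> is_functor X Y Fo Fm \<and>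
     (\<exists>Go Gm \<eta> \<epsilon>. is_functor Y X Go Gm \<and>
        nat_iso X X (\<lambda>x. x) (\<lambda>x y a. a) (\<lambda>x. Go (Fo x)) (\<lambda>x y a. Gm (Fo x) (Fo y) (Fm x y a)) \<eta> \<and>
        nat_iso Y Y (\<lambda>y. Fo (Go y)) (\<lambda>x y a. Fm (Go x) (Go y) (Gm x y a)) (\<lambda>y. y) (\<lambda>x y a. a) \<epsilon>)"

definition gpd_fibration ::
  "('x,'y) grpd \<Rightarrow> ('x2,'y2) grpd \<Rightarrow> ('x \<Rightarrow> 'x2) \<Rightarrow> ('x \<Rightarrow> 'x \<Rightarrow> 'y \<Rightarrow> 'y2) \<Rightarrow> bool" where
  "gpd_fibration X Y Fo Fm \<longleftrightarrow> is_functor X Y Fo Fm \<and>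
     (\<forall>x\<in>gObj X. \<forall>y\<in>gObj Y. \<forall>a. iso_arr Y (Fo x) y a \<longrightarrow>
        (\<exists>x1\<in>gObj X. \<exists>b. iso_arr X x x1 b \<and> Fm x x1 b = a))"

text \<open>E_H S : objects S, morphisms (h,s) : s \<rightarrow> h.s, composition via multiplication in H.\<close>

definition act_grpd ::
  "('h,'c) monoid_scheme \<Rightarrow> ('h \<Rightarrow> 's \<Rightarrow> 's) \<Rightarrow> 's set \<Rightarrow> ('s, 'h \<times> 's) grpd" where
  "act_grpd H act S =
     \<lparr> gObj = S,
       gHom = (\<lambda>s t. {(h, s) |h. h \<in> carrier H \<and> s \<in> S \<and> act h s = t}),
       gcomp = (\<lambda>(h', s') (h, s). (h' \<otimes>\<^bsub>H\<^esub> h, s)),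
       gid = (\<lambda>s. (\<one>\<^bsub>H\<^esub>, s)) \<rparr>"

definition hfix ::
  "('x,'y) grpd \<Rightarrow> ('x \<Rightarrow> 'x) \<Rightarrow> ('y \<Rightarrow> 'y) \<Rightarrow> ('x \<times> 'y, 'y) grpd" where
  "hfix X bo bm =
     \<lparr> gObj = {(x, \<phi>). x \<in> gObj X \<and> \<phi> \<in> gHom X x (bo x) \<and>
                 gcomp X (bm \<phi>) \<phi> = gid X x \<and> gcomp X \<phi> (bm \<phi>) = gid X (bo x)},
       gHom = (\<lambda>(x, \<phi>) (x1, \<phi>1). {a \<in> gHom X x x1. gcomp X \<phi>1 a = gcomp X (bm a) \<phi>}),
       gcomp = gcomp X,
       gid = (\<lambda>(x, \<phi>). gid X x) \<rparr>"

definition EBBG :: "('o \<Rightarrow> 'a monoid) \<Rightarrow> ('o \<Rightarrow> 'a set) \<Rightarrow> 'o \<Rightarrow> ('a, ('a \<times> 'a) \<times> 'a) grpd" where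
  "EBBG G B U = act_grpd ((G U)\<lparr>carrier := B U\<rparr> \<times>\<times> (G U)\<lparr>carrier := B U\<rparr>)
     (\<lambda>(b1, b2) g. b1 \<otimes>\<^bsub>G U\<^esub> g \<otimes>\<^bsub>G U\<^esub> inv\<^bsub>G U\<^esub> b2) (carrier (G U))"

definition bar_obj :: "('o \<Rightarrow> 'a monoid) \<Rightarrow> ('o \<Rightarrow> 'a \<Rightarrow> 'a) \<Rightarrow> 'o \<Rightarrow> 'a \<Rightarrow> 'a" where
  "bar_obj G \<theta> U g = \<theta> U (inv\<^bsub>G U\<^esub> g)"

definition bar_mor :: "('o \<Rightarrow> 'a monoid) \<Rightarrow> ('o \<Rightarrow> 'a \<Rightarrow> 'a) \<Rightarrow> 'o \<Rightarrow> ('a \<times> 'a) \<times> 'a \<Rightarrow> ('a \<times> 'a) \<times> 'a" where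
  "bar_mor G \<theta> U = (\<lambda>((b1, b2), g). ((\<theta> U b2, \<theta> U b1), bar_obj G \<theta> U g))"

definition hEBBG :: "('o \<Rightarrow> 'a monoid) \<Rightarrow> ('o \<Rightarrow> 'a \<Rightarrow> 'a) \<Rightarrow> ('o \<Rightarrow> 'a set) \<Rightarrow> 'o
    \<Rightarrow> ('a \<times> (('a \<times> 'a) \<times> 'a), ('a \<times> 'a) \<times> 'a) grpd" where
  "hEBBG G \<theta> B U = hfix (EBBG G B U) (bar_obj G \<theta> U) (bar_mor G \<theta> U)"

definition Z1 :: "'a monoid \<Rightarrow> ('a \<Rightarrow> 'a) \<Rightarrow> 'a set" where
  "Z1 H t = {g \<in> carrier H. g \<otimes>\<^bsub>H\<^esub> t g = \<one>\<^bsub>H\<^esub>}"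

definition EBZ :: "('o \<Rightarrow> 'a monoid) \<Rightarrow> ('o \<Rightarrow> 'a \<Rightarrow> 'a) \<Rightarrow> ('o \<Rightarrow> 'a set) \<Rightarrow> 'o \<Rightarrow> ('a, 'a \<times> 'a) grpd" where
  "EBZ G \<theta> B U = act_grpd ((G U)\<lparr>carrier := B U\<rparr>)
     (\<lambda>b g. \<theta> U b \<otimes>\<^bsub>G U\<^esub> g \<otimes>\<^bsub>G U\<^esub> inv\<^bsub>G U\<^esub> b) (Z1 (G U) (\<theta> U))"

definition can_obj :: "('o \<Rightarrow> 'a monoid) \<Rightarrow> 'o \<Rightarrow> 'a \<times> (('a \<times> 'a) \<times> 'a) \<Rightarrow> 'a" where
  "can_obj G U = (\<lambda>(g, ((b1, b2), g')). b1 \<otimes>\<^bsub>G U\<^esub> g)"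

definition can_mor :: "('o \<Rightarrow> 'a monoid) \<Rightarrow> 'o \<Rightarrow> 'a \<times> (('a \<times> 'a) \<times> 'a) \<Rightarrow> 'a \<times> (('a \<times> 'a) \<times> 'a)
    \<Rightarrow> ('a \<times> 'a) \<times> 'a \<Rightarrow> 'a \<times> 'a" where
  "can_mor G U x y = (\<lambda>((c1, c2), g). (c2, can_obj G U x))"

definition res_mEBB :: "('a \<Rightarrow> 'a) \<Rightarrow> ('a \<times> 'a) \<times> 'a \<Rightarrow> ('a \<times> 'a) \<times> 'a" where
  "res_mEBB r = (\<lambda>((b1, b2), g). ((r b1, r b2), r g))"

definition res_ohEBB :: "('a \<Rightarrow> 'a) \<Rightarrow> 'a \<times> (('a \<times> 'a) \<times> 'a) \<Rightarrow> 'a \<times> (('a \<times> 'a) \<times> 'a)" where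
  "res_ohEBB r = (\<lambda>(g, \<phi>). (r g, res_mEBB r \<phi>))"

definition res_mEBZ :: "('a \<Rightarrow> 'a) \<Rightarrow> 'a \<times> 'a \<Rightarrow> 'a \<times> 'a" where
  "res_mEBZ r = (\<lambda>(b, g). (r b, r g))"

end

theory Submission
  imports Defs
begin

(*
  The condition on an object (x, phi) of (E_{BxB} G)^{h Gamma} forces phi = ((b, theta(b)^-1), x)
  with b x theta(b) = theta(x)^-1, i.e. with b x in Z^1(theta; G); so objects are pairs (x, b)
  with b x a cocycle, and the canonical map sends (x, b) to b x and an arrow ((c1, c2), x) to c2.
  It is an equivalence with quasi-inverse z |-> (z, 1), because ((b, 1), x) : (x, b) -> (b x, 1),
  and a fibration, because an arrow h : b x -> theta(h) b x h^-1 lifts to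
  ((1, h), x) : (x, b) -> (x h^-1, theta(h) b).  All of this happens sectionwise, and the
  compatibility with restrictions only uses that restriction maps are homomorphisms.
*)

lemma (in group) inv_mult_cancel_left [simp]:
  "x \<in> carrier G \<Longrightarrow> y \<in> carrier G \<Longrightarrow> inv x \<otimes> (x \<otimes> y) = y"
  by (simp add: m_assoc[symmetric])

lemma (in group) mult_eq_one_iff_eq_inv:
  "x \<in> carrier G \<Longrightarrow> y \<in> carrier G \<Longrightarrow> x \<otimes> y = \<one> \<longleftrightarrow> x = inv y"
  by (metis inv_equality l_inv)

locale group_involution = group_hom M M \<theta> for M :: "'a monoid" (structure) and \<theta> +
  assumes involutive: "x \<in> carrier M \<Longrightarrow> \<theta> (\<theta> x) = x"
begin

lemma Z1_iff: "y \<in> Z1 M \<theta> \<longleftrightarrow> y \<in> carrier M \<and> \<theta> y = inv y"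
proof -
  have "y \<otimes> \<theta> y = \<one> \<longleftrightarrow> \<theta> y = inv y" if "y \<in> carrier M"
    using that by (metis mult_eq_one_iff_eq_inv hom_closed inv_inv)
  then show ?thesis unfolding Z1_def by blast
qed

lemma mult_in_Z1_iff:
  assumes "b \<in> carrier M" "x \<in> carrier M"
  shows "b \<otimes> x \<in> Z1 M \<theta> \<longleftrightarrow> b \<otimes> x \<otimes> \<theta> b = \<theta> (inv x)"
proof -
  have "b \<otimes> x \<otimes> \<theta> (b \<otimes> x) = (b \<otimes> x \<otimes> \<theta> b) \<otimes> \<theta> x"
    using assms by (simp add: m_assoc)
  then show ?thesis
    using assms by (simp add: Z1_def mult_eq_one_iff_eq_inv)
qed

lemma involution_transpose_eq:
  assumes "b \<in> carrier M" "c1 \<in> carrier M" "c2 \<in> carrier M" "d \<in> carrier M"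
    and "d \<otimes> c1 = \<theta> c2 \<otimes> b"
  shows "inv (\<theta> d) \<otimes> c2 = \<theta> c1 \<otimes> inv (\<theta> b)"
proof -
  have "\<theta> d \<otimes> \<theta> c1 = c2 \<otimes> \<theta> b"
    using assms by (metis hom_mult hom_closed involutive)
  have carrier: "\<theta> b \<in> carrier M" "\<theta> c1 \<in> carrier M" "\<theta> d \<in> carrier M"
    using assms by simp_all
  have "inv (\<theta> d) \<otimes> c2 = inv (\<theta> d) \<otimes> (c2 \<otimes> \<theta> b) \<otimes> inv (\<theta> b)"
    using assms carrier by (simp add: m_assoc)
  also have "\<dots> = inv (\<theta> d) \<otimes> (\<theta> d \<otimes> \<theta> c1) \<otimes> inv (\<theta> b)"
    by (simp add: \<open>\<theta> d \<otimes> \<theta> c1 = c2 \<otimes> \<theta> b\<close>)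
  also have "\<dots> = \<theta> c1 \<otimes> inv (\<theta> b)"
    using carrier by (simp add: m_assoc[symmetric])
  finally show ?thesis .
qed

end

locale stable_subgroup_involution = group_involution +
  fixes B :: "'a set"
  assumes subgroup_B: "subgroup B M"
    and involution_image: "\<theta> ` B = B"
begin

sublocale B: subgroup B M
  by (fact subgroup_B)

lemma involution_closed_B: "b \<in> B \<Longrightarrow> \<theta> b \<in> B"
  using involution_image by blast

definition pair_grpd :: "('a, ('a \<times> 'a) \<times> 'a) grpd" where
  "pair_grpd = act_grpd (M\<lparr>carrier := B\<rparr> \<times>\<times> M\<lparr>carrier := B\<rparr>)
     (\<lambda>(b1, b2) g. b1 \<otimes> g \<otimes> inv b2) (carrier M)"

definition hfix_grpd :: "('a \<times> ('a \<times> 'a) \<times> 'a, ('a \<times> 'a) \<times> 'a) grpd" where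
  "hfix_grpd = hfix pair_grpd (\<lambda>g. \<theta> (inv g)) (\<lambda>((b1, b2), g). ((\<theta> b2, \<theta> b1), \<theta> (inv g)))"

definition cocycle_grpd :: "('a, 'a \<times> 'a) grpd" where
  "cocycle_grpd = act_grpd (M\<lparr>carrier := B\<rparr>) (\<lambda>b g. \<theta> b \<otimes> g \<otimes> inv b) (Z1 M \<theta>)"

definition can_o :: "'a \<times> ('a \<times> 'a) \<times> 'a \<Rightarrow> 'a" where
  "can_o = (\<lambda>(g, ((b1, b2), g')). b1 \<otimes> g)"

definition can_m ::
    "'a \<times> ('a \<times> 'a) \<times> 'a \<Rightarrow> 'a \<times> ('a \<times> 'a) \<times> 'a \<Rightarrow> ('a \<times> 'a) \<times> 'a \<Rightarrow> 'a \<times> 'a" where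
  "can_m p q = (\<lambda>((c1, c2), g). (c2, can_o p))"

definition hfix_point :: "'a \<Rightarrow> 'a \<Rightarrow> 'a \<times> ('a \<times> 'a) \<times> 'a" where
  "hfix_point x b = (x, ((b, inv (\<theta> b)), x))"

lemma can_o_hfix_point [simp]: "can_o (hfix_point x b) = b \<otimes> x"
  by (simp add: can_o_def hfix_point_def)

lemma can_m_apply [simp]: "can_m p q ((c1, c2), g) = (c2, can_o p)"
  by (simp add: can_m_def)

lemma hfix_grpd_gcomp [simp]:
  "gcomp hfix_grpd ((c1', c2'), y) ((c1, c2), x) = ((c1' \<otimes> c1, c2' \<otimes> c2), x)"
  by (simp add: hfix_grpd_def pair_grpd_def hfix_def act_grpd_def)

lemma hfix_grpd_gid [simp]: "gid hfix_grpd (x, \<phi>) = ((\<one>, \<one>), x)"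
  by (simp add: hfix_grpd_def pair_grpd_def hfix_def act_grpd_def)

lemma cocycle_grpd_gObj [simp]: "gObj cocycle_grpd = Z1 M \<theta>"
  by (simp add: cocycle_grpd_def act_grpd_def)

lemma cocycle_grpd_gHom:
  "gHom cocycle_grpd y z = {(h, y) |h. h \<in> B \<and> y \<in> Z1 M \<theta> \<and> \<theta> h \<otimes> y \<otimes> inv h = z}"
  by (simp add: cocycle_grpd_def act_grpd_def)

lemma cocycle_grpd_gcomp [simp]: "gcomp cocycle_grpd (h', y') (h, y) = (h' \<otimes> h, y)"
  by (simp add: cocycle_grpd_def act_grpd_def)

lemma cocycle_grpd_gid [simp]: "gid cocycle_grpd y = (\<one>, y)"
  by (simp add: cocycle_grpd_def act_grpd_def)

lemma hfix_grpd_gObj_iff: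
  "p \<in> gObj hfix_grpd \<longleftrightarrow>
     (\<exists>x b. p = hfix_point x b \<and> x \<in> carrier M \<and> b \<in> B \<and> b \<otimes> x \<in> Z1 M \<theta>)"
proof
  assume "p \<in> gObj hfix_grpd"
  then obtain x b1 b2 where p: "p = (x, ((b1, b2), x))" and x: "x \<in> carrier M"
    and b: "b1 \<in> B" "b2 \<in> B" and act: "b1 \<otimes> x \<otimes> inv b2 = \<theta> (inv x)" and "\<theta> b2 \<otimes> b1 = \<one>"
    by (auto simp: hfix_grpd_def pair_grpd_def hfix_def act_grpd_def)
  then have "b2 = inv (\<theta> b1)"
    using b by (metis B.mem_carrier hom_closed hom_inv inv_equality involutive)
  then show "\<exists>x b. p = hfix_point x b \<and> x \<in> carrier M \<and> b \<in> B \<and> b \<otimes> x \<in> Z1 M \<theta>"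
    using p x b act by (auto simp: hfix_point_def mult_in_Z1_iff)
next
  assume "\<exists>x b. p = hfix_point x b \<and> x \<in> carrier M \<and> b \<in> B \<and> b \<otimes> x \<in> Z1 M \<theta>"
  then obtain x b where p: "p = hfix_point x b" and x: "x \<in> carrier M" and b: "b \<in> B"
    and Z: "b \<otimes> x \<in> Z1 M \<theta>" by blast
  have b_carrier: "b \<in> carrier M" "\<theta> b \<in> carrier M" "\<theta> b \<in> B"
    using b by (auto simp: involution_closed_B)
  have "\<theta> (inv (\<theta> b)) = inv b"
    using b_carrier by (simp add: involutive)
  then show "p \<in> gObj hfix_grpd"
    using p x b Z b_carrier
    unfolding hfix_grpd_def pair_grpd_def hfix_def act_grpd_def hfix_point_def
    by (simp add: mult_in_Z1_iff)
qed

lemma hfix_grpd_gObjE: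
  assumes "p \<in> gObj hfix_grpd"
  obtains x b where "p = hfix_point x b" "x \<in> carrier M" "b \<in> B" "b \<otimes> x \<in> Z1 M \<theta>"
  using assms hfix_grpd_gObj_iff by blast

lemma hfix_point_in_gObj:
  "x \<in> carrier M \<Longrightarrow> b \<in> B \<Longrightarrow> b \<otimes> x \<in> Z1 M \<theta> \<Longrightarrow> hfix_point x b \<in> gObj hfix_grpd"
  using hfix_grpd_gObj_iff by blast

lemma hfix_grpd_gHom_iff:
  assumes "x \<in> carrier M" "b \<in> B" "y \<in> carrier M" "d \<in> B"
  shows "a \<in> gHom hfix_grpd (hfix_point x b) (hfix_point y d) \<longleftrightarrow>
    (\<exists>c1 c2. a = ((c1, c2), x) \<and> c1 \<in> B \<and> c2 \<in> B \<and> c1 \<otimes> x \<otimes> inv c2 = y \<and> d \<otimes> c1 = \<theta> c2 \<otimes> b)"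
    (is "_ \<longleftrightarrow> (\<exists>c1 c2. ?hom c1 c2)")
proof
  assume "a \<in> gHom hfix_grpd (hfix_point x b) (hfix_point y d)"
  then obtain c1 c2 where "a = ((c1, c2), x)" "c1 \<in> B" "c2 \<in> B" "c1 \<otimes> x \<otimes> inv c2 = y"
    and "d \<otimes> c1 = \<theta> c2 \<otimes> b"
    by (auto simp: hfix_grpd_def pair_grpd_def hfix_def act_grpd_def hfix_point_def)
  then show "\<exists>c1 c2. ?hom c1 c2" by blast
next
  assume "\<exists>c1 c2. ?hom c1 c2"
  then obtain c1 c2 where hom: "?hom c1 c2" by blast
  then have "inv (\<theta> d) \<otimes> c2 = \<theta> c1 \<otimes> inv (\<theta> b)"
    using assms by (simp add: involution_transpose_eq)
  then show "a \<in> gHom hfix_grpd (hfix_point x b) (hfix_point y d)"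
    using assms hom by (simp add: hfix_grpd_def pair_grpd_def hfix_def act_grpd_def hfix_point_def)
qed

lemma hfix_grpd_gHomE:
  assumes "p \<in> gObj hfix_grpd" "q \<in> gObj hfix_grpd" "a \<in> gHom hfix_grpd p q"
  obtains x b y d c1 c2
  where "p = hfix_point x b" "x \<in> carrier M" "b \<in> B" "b \<otimes> x \<in> Z1 M \<theta>"
    and "q = hfix_point y d" "y \<in> carrier M" "d \<in> B" "d \<otimes> y \<in> Z1 M \<theta>"
    and "a = ((c1, c2), x)" "c1 \<in> B" "c2 \<in> B" "c1 \<otimes> x \<otimes> inv c2 = y" "d \<otimes> c1 = \<theta> c2 \<otimes> b"
proof -
  obtain x b where p: "p = hfix_point x b" "x \<in> carrier M" "b \<in> B" "b \<otimes> x \<in> Z1 M \<theta>"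
    using assms(1) by (rule hfix_grpd_gObjE)
  obtain y d where q: "q = hfix_point y d" "y \<in> carrier M" "d \<in> B" "d \<otimes> y \<in> Z1 M \<theta>"
    using assms(2) by (rule hfix_grpd_gObjE)
  show thesis
    using that p q assms(3) hfix_grpd_gHom_iff[OF p(2,3) q(2,3)] by blast
qed

lemma hfix_grpd_iso_arr:
  assumes "p \<in> gObj hfix_grpd" "q \<in> gObj hfix_grpd" "a \<in> gHom hfix_grpd p q"
  shows "iso_arr hfix_grpd p q a"
proof -
  obtain x b y d c1 c2
    where p: "p = hfix_point x b" "x \<in> carrier M" "b \<in> B"
      and q: "q = hfix_point y d" "y \<in> carrier M" "d \<in> B"
      and a: "a = ((c1, c2), x)" "c1 \<in> B" "c2 \<in> B" "c1 \<otimes> x \<otimes> inv c2 = y" "d \<otimes> c1 = \<theta> c2 \<otimes> b"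
    using assms by (rule hfix_grpd_gHomE)
  have carrier: "b \<in> carrier M" "d \<in> carrier M" "c1 \<in> carrier M" "c2 \<in> carrier M" "\<theta> c2 \<in> carrier M"
    using p q a by simp_all
  have "inv c1 \<otimes> y \<otimes> inv (inv c2) = x"
    using a(4)[symmetric] p(2) carrier by (simp add: m_assoc)
  moreover have "b \<otimes> inv c1 = \<theta> (inv c2) \<otimes> d"
  proof -
    have "d = \<theta> c2 \<otimes> b \<otimes> inv c1"
      using a(5) carrier by (simp add: inv_solve_right)
    then show ?thesis
      using carrier by (simp add: m_assoc)
  qed
  ultimately have "((inv c1, inv c2), y) \<in> gHom hfix_grpd q p"
    using p q a by (simp add: hfix_grpd_gHom_iff)
  then show ?thesis
    unfolding iso_arr_def using assms(3) p(1) q(1) a carrier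
    by (intro conjI bexI[of _ "((inv c1, inv c2), y)"]) (simp_all add: hfix_point_def)
qed

lemma cocycle_grpd_iso_arr:
  assumes "a \<in> gHom cocycle_grpd y z" "z \<in> Z1 M \<theta>"
  shows "iso_arr cocycle_grpd y z a"
proof -
  obtain h where a: "a = (h, y)" "h \<in> B" "y \<in> Z1 M \<theta>" "\<theta> h \<otimes> y \<otimes> inv h = z"
    using assms(1) by (auto simp: cocycle_grpd_gHom)
  have carrier: "h \<in> carrier M" "y \<in> carrier M" "\<theta> h \<in> carrier M"
    using a by (simp_all add: Z1_iff)
  have "\<theta> (inv h) \<otimes> z \<otimes> inv (inv h) = y"
    using a(4)[symmetric] carrier by (simp add: m_assoc)
  then have "(inv h, z) \<in> gHom cocycle_grpd z y"
    using a(2) assms(2) by (simp add: cocycle_grpd_gHom)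
  then show ?thesis
    unfolding iso_arr_def using assms(1) a(1) carrier
    by (intro conjI bexI[of _ "(inv h, z)"]) simp_all
qed

lemma can_functor: "is_functor hfix_grpd cocycle_grpd can_o can_m"
  unfolding is_functor_def
proof (intro conjI ballI)
  fix p assume "p \<in> gObj hfix_grpd"
  then show "can_o p \<in> gObj cocycle_grpd"
    by (auto elim: hfix_grpd_gObjE)
next
  fix p q a assume "p \<in> gObj hfix_grpd" "q \<in> gObj hfix_grpd" "a \<in> gHom hfix_grpd p q"
  then obtain x b y d c1 c2
    where p: "p = hfix_point x b" "x \<in> carrier M" "b \<in> B" "b \<otimes> x \<in> Z1 M \<theta>"
      and q: "q = hfix_point y d" "d \<in> B"
      and a: "a = ((c1, c2), x)" "c1 \<in> B" "c2 \<in> B" "c1 \<otimes> x \<otimes> inv c2 = y" "d \<otimes> c1 = \<theta> c2 \<otimes> b"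
    by (rule hfix_grpd_gHomE)
  have "\<theta> c2 \<otimes> (b \<otimes> x) \<otimes> inv c2 = (\<theta> c2 \<otimes> b) \<otimes> x \<otimes> inv c2"
    using p a by (simp add: m_assoc)
  also have "\<dots> = d \<otimes> (c1 \<otimes> x \<otimes> inv c2)"
    using p q a by (simp flip: a(5) add: m_assoc)
  finally have "\<theta> c2 \<otimes> (b \<otimes> x) \<otimes> inv c2 = d \<otimes> y"
    using a(4) by simp
  then show "can_m p q a \<in> gHom cocycle_grpd (can_o p) (can_o q)"
    using p q a by (simp add: cocycle_grpd_gHom)
next
  fix p q r a a'
  assume p: "p \<in> gObj hfix_grpd" and q: "q \<in> gObj hfix_grpd" and r: "r \<in> gObj hfix_grpd"
    and "a \<in> gHom hfix_grpd p q" "a' \<in> gHom hfix_grpd q r"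
  obtain c1 c2 x where "a = ((c1, c2), x)"
    using p q \<open>a \<in> gHom hfix_grpd p q\<close> by (rule hfix_grpd_gHomE)
  moreover obtain c1' c2' y where "a' = ((c1', c2'), y)"
    using q r \<open>a' \<in> gHom hfix_grpd q r\<close> by (rule hfix_grpd_gHomE)
  ultimately show "can_m p r (gcomp hfix_grpd a' a) = gcomp cocycle_grpd (can_m q r a') (can_m p q a)"
    by simp
next
  fix p assume "p \<in> gObj hfix_grpd"
  then show "can_m p p (gid hfix_grpd p) = gid cocycle_grpd (can_o p)"
    by (auto simp: hfix_point_def elim: hfix_grpd_gObjE)
qed

lemma can_fibration: "gpd_fibration hfix_grpd cocycle_grpd can_o can_m"
  unfolding gpd_fibration_def
proof (intro conjI can_functor ballI allI impI)
  fix p z a assume p: "p \<in> gObj hfix_grpd" and z: "z \<in> gObj cocycle_grpd"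
    and a: "iso_arr cocycle_grpd (can_o p) z a"
  obtain x b where x: "p = hfix_point x b" "x \<in> carrier M" "b \<in> B" "b \<otimes> x \<in> Z1 M \<theta>"
    using p by (rule hfix_grpd_gObjE)
  obtain h where h: "a = (h, b \<otimes> x)" "h \<in> B" "\<theta> h \<otimes> (b \<otimes> x) \<otimes> inv h = z"
    using a x(1) by (auto simp: iso_arr_def cocycle_grpd_gHom)
  let ?p1 = "hfix_point (x \<otimes> inv h) (\<theta> h \<otimes> b)"
  have "(\<theta> h \<otimes> b) \<otimes> (x \<otimes> inv h) = z"
    using x h by (simp add: m_assoc)
  then have p1: "?p1 \<in> gObj hfix_grpd"
    using x h z by (simp add: hfix_point_in_gObj involution_closed_B)
  have "((\<one>, h), x) \<in> gHom hfix_grpd p ?p1"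
    using x h by (simp add: hfix_grpd_gHom_iff involution_closed_B)
  then have "iso_arr hfix_grpd p ?p1 ((\<one>, h), x) \<and> can_m p ?p1 ((\<one>, h), x) = a"
    using p p1 x h by (simp add: hfix_grpd_iso_arr)
  with p1 show "\<exists>p1\<in>gObj hfix_grpd. \<exists>a'. iso_arr hfix_grpd p p1 a' \<and> can_m p p1 a' = a"
    by blast
qed

definition incl_o :: "'a \<Rightarrow> 'a \<times> ('a \<times> 'a) \<times> 'a" where
  "incl_o y = hfix_point y \<one>"

definition incl_m :: "'a \<Rightarrow> 'a \<Rightarrow> 'a \<times> 'a \<Rightarrow> ('a \<times> 'a) \<times> 'a" where
  "incl_m y z = (\<lambda>(h, s). ((\<theta> h, h), y))"

definition unit_arr :: "'a \<times> ('a \<times> 'a) \<times> 'a \<Rightarrow> ('a \<times> 'a) \<times> 'a" where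
  "unit_arr = (\<lambda>(x, ((b, b'), x')). ((b, \<one>), x))"

lemma incl_m_apply [simp]: "incl_m y z (h, s) = ((\<theta> h, h), y)"
  by (simp add: incl_m_def)

lemma unit_arr_hfix_point [simp]: "unit_arr (hfix_point x b) = ((b, \<one>), x)"
  by (simp add: unit_arr_def hfix_point_def)

lemma incl_functor: "is_functor cocycle_grpd hfix_grpd incl_o incl_m"
  unfolding is_functor_def
proof (intro conjI ballI)
  fix y assume "y \<in> gObj cocycle_grpd"
  then show "incl_o y \<in> gObj hfix_grpd"
    by (simp add: incl_o_def hfix_point_in_gObj Z1_iff)
next
  fix y z a assume "y \<in> gObj cocycle_grpd" "z \<in> gObj cocycle_grpd" "a \<in> gHom cocycle_grpd y z"
  then obtain h where "a = (h, y)" "h \<in> B" "y \<in> carrier M" "\<theta> h \<otimes> y \<otimes> inv h = z"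
    by (auto simp: cocycle_grpd_gHom Z1_iff)
  then show "incl_m y z a \<in> gHom hfix_grpd (incl_o y) (incl_o z)"
    using \<open>z \<in> gObj cocycle_grpd\<close>
    by (simp add: incl_o_def hfix_grpd_gHom_iff involution_closed_B Z1_iff)
next
  fix y z w a a'
  assume "y \<in> gObj cocycle_grpd" "z \<in> gObj cocycle_grpd" "w \<in> gObj cocycle_grpd"
    and "a \<in> gHom cocycle_grpd y z" "a' \<in> gHom cocycle_grpd z w"
  then obtain h h' where "a = (h, y)" "a' = (h', z)" "h \<in> carrier M" "h' \<in> carrier M"
    by (auto simp: cocycle_grpd_gHom)
  then show "incl_m y w (gcomp cocycle_grpd a' a) = gcomp hfix_grpd (incl_m z w a') (incl_m y z a)"
    by simp
next
  fix y assume "y \<in> gObj cocycle_grpd"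
  then show "incl_m y y (gid cocycle_grpd y) = gid hfix_grpd (incl_o y)"
    by (simp add: incl_o_def hfix_point_def)
qed

lemma unit_nat_iso:
  "nat_iso hfix_grpd hfix_grpd (\<lambda>p. p) (\<lambda>p q a. a)
     (\<lambda>p. incl_o (can_o p)) (\<lambda>p q a. incl_m (can_o p) (can_o q) (can_m p q a)) unit_arr"
  unfolding nat_iso_def
proof (intro conjI ballI)
  fix p assume p: "p \<in> gObj hfix_grpd"
  then obtain x b where x: "p = hfix_point x b" "x \<in> carrier M" "b \<in> B" "b \<otimes> x \<in> Z1 M \<theta>"
    by (rule hfix_grpd_gObjE)
  have "unit_arr p \<in> gHom hfix_grpd p (incl_o (can_o p))"
    using x by (simp add: incl_o_def hfix_grpd_gHom_iff)
  then show "iso_arr hfix_grpd p (incl_o (can_o p)) (unit_arr p)"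
    using p x by (simp add: hfix_grpd_iso_arr incl_o_def hfix_point_in_gObj)
next
  fix p q a assume "p \<in> gObj hfix_grpd" "q \<in> gObj hfix_grpd" "a \<in> gHom hfix_grpd p q"
  then obtain x b y d c1 c2
    where "p = hfix_point x b" "q = hfix_point y d" "a = ((c1, c2), x)"
      and "c1 \<in> B" "c2 \<in> B" "d \<otimes> c1 = \<theta> c2 \<otimes> b"
    by (rule hfix_grpd_gHomE)
  then show "gcomp hfix_grpd (unit_arr q) a =
      gcomp hfix_grpd (incl_m (can_o p) (can_o q) (can_m p q a)) (unit_arr p)"
    by simp
qed

lemma counit_nat_iso:
  "nat_iso cocycle_grpd cocycle_grpd (\<lambda>y. can_o (incl_o y))
     (\<lambda>y z a. can_m (incl_o y) (incl_o z) (incl_m y z a)) (\<lambda>y. y) (\<lambda>y z a. a) (gid cocycle_grpd)"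
  unfolding nat_iso_def
proof (intro conjI ballI)
  fix y assume y: "y \<in> gObj cocycle_grpd"
  then have "gid cocycle_grpd y \<in> gHom cocycle_grpd y y"
    by (simp add: cocycle_grpd_gHom Z1_iff)
  then show "iso_arr cocycle_grpd (can_o (incl_o y)) y (gid cocycle_grpd y)"
    using y by (simp add: cocycle_grpd_iso_arr incl_o_def Z1_iff)
next
  fix y z a assume "y \<in> gObj cocycle_grpd" "z \<in> gObj cocycle_grpd" "a \<in> gHom cocycle_grpd y z"
  then obtain h where "a = (h, y)" "h \<in> carrier M" "y \<in> carrier M"
    by (auto simp: cocycle_grpd_gHom Z1_iff)
  then show "gcomp cocycle_grpd (gid cocycle_grpd z) (can_m (incl_o y) (incl_o z) (incl_m y z a)) =
      gcomp cocycle_grpd a (gid cocycle_grpd y)"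
    by (simp add: incl_o_def)
qed

lemma can_weak_equivalence: "weak_equivalence hfix_grpd cocycle_grpd can_o can_m"
  unfolding weak_equivalence_def
  using can_functor incl_functor unit_nat_iso counit_nat_iso by blast

end

lemma section_stable_subgroup_involution:
  assumes "presheaf_of_groups C G res" "presheaf_involution C G res \<theta>"
    and "subgroup_presheaf C G res B" "\<theta> U ` B U = B U" "U \<in> Ob C"
  shows "stable_subgroup_involution (G U) (\<theta> U) (B U)"
proof -
  have "group (G U)"
    using assms(1,5) unfolding presheaf_of_groups_def by blast
  moreover have "\<theta> U \<in> hom (G U) (G U)" "\<forall>x\<in>carrier (G U). \<theta> U (\<theta> U x) = x"
    using assms(2,5) unfolding presheaf_involution_def by blast+
  moreover have "subgroup (B U) (G U)"
    using assms(3,5) unfolding subgroup_presheaf_def by blast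
  ultimately show ?thesis
    using assms(4)
    by (simp add: stable_subgroup_involution_def stable_subgroup_involution_axioms_def
        group_involution_def group_involution_axioms_def group_hom_def group_hom_axioms_def)
qed

lemma section_constructions_eq:
  fixes G :: "'o \<Rightarrow> 'a monoid" and \<theta> B U
  assumes stable: "stable_subgroup_involution (G U) (\<theta> U) (B U)"
  shows "hEBBG G \<theta> B U = stable_subgroup_involution.hfix_grpd (G U) (\<theta> U) (B U)"
    and "EBZ G \<theta> B U = stable_subgroup_involution.cocycle_grpd (G U) (\<theta> U) (B U)"
    and "can_obj G U = stable_subgroup_involution.can_o (G U)"
    and "can_mor G U = stable_subgroup_involution.can_m (G U)"
proof -
  show "hEBBG G \<theta> B U = stable_subgroup_involution.hfix_grpd (G U) (\<theta> U) (B U)"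
    by (simp add: hEBBG_def EBBG_def bar_obj_def[abs_def] bar_mor_def
        stable_subgroup_involution.hfix_grpd_def[OF stable]
        stable_subgroup_involution.pair_grpd_def[OF stable])
  show "EBZ G \<theta> B U = stable_subgroup_involution.cocycle_grpd (G U) (\<theta> U) (B U)"
    by (simp add: EBZ_def stable_subgroup_involution.cocycle_grpd_def[OF stable])
  show can_o: "can_obj G U = stable_subgroup_involution.can_o (G U)"
    by (simp add: can_obj_def stable_subgroup_involution.can_o_def[OF stable])
  show "can_mor G U = stable_subgroup_involution.can_m (G U)"
    by (simp add: can_mor_def[abs_def] stable_subgroup_involution.can_m_def[OF stable, abs_def] can_o)
qed

lemma can_natural:
  assumes "stable_subgroup_involution (G W) (\<theta> W) (B W)" "r \<in> hom (G W) (G V)"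
    and "x \<in> gObj (hEBBG G \<theta> B W)"
  shows "can_obj G V (res_ohEBB r x) = r (can_obj G W x)"
    and "can_mor G V (res_ohEBB r x) (res_ohEBB r y) (res_mEBB r a) = res_mEBZ r (can_mor G W x y a)"
proof -
  interpret stable_subgroup_involution "G W" "\<theta> W" "B W"
    by (fact assms(1))
  obtain g b where "x = hfix_point g b" "g \<in> carrier (G W)" "b \<in> B W"
    using assms(3) unfolding section_constructions_eq(1)[of G W \<theta> B, OF assms(1)]
    by (rule hfix_grpd_gObjE)
  moreover have "b \<in> carrier (G W)"
    using \<open>b \<in> B W\<close> by (rule B.mem_carrier)
  ultimately show obj: "can_obj G V (res_ohEBB r x) = r (can_obj G W x)"
    using assms(2) by (simp add: can_obj_def res_ohEBB_def res_mEBB_def hfix_point_def Group.hom_mult)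
  obtain c1 c2 g' where "a = ((c1, c2), g')"
    by (metis prod.exhaust)
  then show "can_mor G V (res_ohEBB r x) (res_ohEBB r y) (res_mEBB r a) = res_mEBZ r (can_mor G W x y a)"
    using obj by (simp add: can_mor_def res_mEBB_def res_mEBZ_def)
qed

theorem mainTheorem10:
  fixes C :: "('o, 'm) cat"
    and G :: "'o \<Rightarrow> 'a monoid"
    and res :: "'m \<Rightarrow> 'a \<Rightarrow> 'a"
    and \<theta> :: "'o \<Rightarrow> 'a \<Rightarrow> 'a"
    and B :: "'o \<Rightarrow> 'a set"
  assumes "category C"
    and "presheaf_of_groups C G res"
    and "presheaf_involution C G res \<theta>"
    and "subgroup_presheaf C G res B"
    and "\<forall>U\<in>Ob C. \<theta> U ` B U = B U"
  shows "(\<forall>U\<in>Ob C.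
            gpd_fibration (hEBBG G \<theta> B U) (EBZ G \<theta> B U) (can_obj G U) (can_mor G U) \<and>
            weak_equivalence (hEBBG G \<theta> B U) (EBZ G \<theta> B U) (can_obj G U) (can_mor G U)) \<and>
         (\<forall>f\<in>Arr C.
            (\<forall>x\<in>gObj (hEBBG G \<theta> B (ccod C f)).
               can_obj G (cdom C f) (res_ohEBB (res f) x) = res f (can_obj G (ccod C f) x)) \<and>
            (\<forall>x\<in>gObj (hEBBG G \<theta> B (ccod C f)). \<forall>y\<in>gObj (hEBBG G \<theta> B (ccod C f)).
             \<forall>a\<in>gHom (hEBBG G \<theta> B (ccod C f)) x y.
               can_mor G (cdom C f) (res_ohEBB (res f) x) (res_ohEBB (res f) y) (res_mEBB (res f) a)
                 = res_mEBZ (res f) (can_mor G (ccod C f) x y a)))"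
proof -
  have stable: "stable_subgroup_involution (G U) (\<theta> U) (B U)" if "U \<in> Ob C" for U
    using assms that by (simp add: section_stable_subgroup_involution)
  have restriction: "ccod C f \<in> Ob C" "res f \<in> hom (G (ccod C f)) (G (cdom C f))" if "f \<in> Arr C" for f
    using assms(1,2) that unfolding category_def presheaf_of_groups_def by blast+
  show ?thesis
  proof (intro conjI ballI)
    fix U assume "U \<in> Ob C"
    then have "stable_subgroup_involution (G U) (\<theta> U) (B U)"
      by (fact stable)
    then show "gpd_fibration (hEBBG G \<theta> B U) (EBZ G \<theta> B U) (can_obj G U) (can_mor G U)"
      and "weak_equivalence (hEBBG G \<theta> B U) (EBZ G \<theta> B U) (can_obj G U) (can_mor G U)"
      by (simp_all add: section_constructions_eq[of G U \<theta> B]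
          stable_subgroup_involution.can_fibration stable_subgroup_involution.can_weak_equivalence)
  next
    fix f x y a assume f: "f \<in> Arr C" and x: "x \<in> gObj (hEBBG G \<theta> B (ccod C f))"
    note natural = can_natural[of G "ccod C f" \<theta> B,
        OF stable[OF restriction(1)[OF f]] restriction(2)[OF f] x]
    show "can_obj G (cdom C f) (res_ohEBB (res f) x) = res f (can_obj G (ccod C f) x)"
      and "can_mor G (cdom C f) (res_ohEBB (res f) x) (res_ohEBB (res f) y) (res_mEBB (res f) a)
             = res_mEBZ (res f) (can_mor G (ccod C f) x y a)"
      by (fact natural)+
  qed
qed

end
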